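(* Let $\lambda_1,\lambda_2>0$, $u^*>0$, $\delta>0$, $\varepsilon>0$ and $\beta\ge0$ with $\varepsilon\lambda_2+\beta<u^*$. Consider the system $\dot\eta_1=u^*-u-\phi_2(\eta_2)$, $\dot\eta_2=u^*-u+\phi_1(\eta_1)$ under the feedback $$u=u^*+\varepsilon\phi_2(\eta_2)+\beta\frac{\varphi(\eta)}{\sqrt{\delta^2+(\min(0,\varphi(\eta)))^2}},\qquad \varphi(\eta)=\phi_1(\eta_1)+(1+\varepsilon)\phi_2(\eta_2).$$ Then the origin $\eta=0$ of the closed-loop system is globally asymptotically stable and locally exponentially stable, and $u(t)>0$ for all $t\ge0$ along every closed-loop solution.
   Context: $\phi_1(\eta_1)=\frac1{\lambda_1}(1-e^{-\eta_1})$, $\phi_2(\eta_2)=\lambda_2(e^{\eta_2}-1)$. *)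

theory Defs
  imports "HOL-Analysis.Analysis"
begin

definition phi1 :: "real \<Rightarrow> real \<Rightarrow> real" where
  "phi1 l1 e1 = (1 / l1) * (1 - exp (- e1))"

definition phi2 :: "real \<Rightarrow> real \<Rightarrow> real" where
  "phi2 l2 e2 = l2 * (exp e2 - 1)"

definition varphi :: "real \<Rightarrow> real \<Rightarrow> real \<Rightarrow> real \<times> real \<Rightarrow> real" where
  "varphi l1 l2 eps \<eta> = phi1 l1 (fst \<eta>) + (1 + eps) * phi2 l2 (snd \<eta>)"

definition feedback :: "real \<Rightarrow> real \<Rightarrow> real \<Rightarrow> real \<Rightarrow> real \<Rightarrow> real \<Rightarrow> real \<times> real \<Rightarrow> real" where
  "feedback l1 l2 us dl eps bt \<eta> =
     us + eps * phi2 l2 (snd \<eta>)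
        + bt * varphi l1 l2 eps \<eta> / sqrt (dl\<^sup>2 + (min 0 (varphi l1 l2 eps \<eta>))\<^sup>2)"

definition closed_loop :: "real \<Rightarrow> real \<Rightarrow> real \<Rightarrow> real \<Rightarrow> real \<Rightarrow> real \<Rightarrow> real \<times> real \<Rightarrow> real \<times> real" where
  "closed_loop l1 l2 us dl eps bt \<eta> =
     (let u = feedback l1 l2 us dl eps bt \<eta>
      in (us - u - phi2 l2 (snd \<eta>), us - u + phi1 l1 (fst \<eta>)))"

definition is_solution :: "(real \<times> real \<Rightarrow> real \<times> real) \<Rightarrow> (real \<Rightarrow> real \<times> real) \<Rightarrow> bool" where
  "is_solution f x \<longleftrightarrow> (\<forall>t\<ge>0. (x has_vector_derivative f (x t)) (at t within {0..}))"

definition GAS_origin :: "(real \<times> real \<Rightarrow> real \<times> real) \<Rightarrow> bool" where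
  "GAS_origin f \<longleftrightarrow>
     (\<forall>x0. \<exists>x. is_solution f x \<and> x 0 = x0) \<and>
     (\<forall>e>0. \<exists>d>0. \<forall>x. is_solution f x \<and> norm (x 0) < d \<longrightarrow> (\<forall>t\<ge>0. norm (x t) < e)) \<and>
     (\<forall>x. is_solution f x \<longrightarrow> (x \<longlongrightarrow> 0) at_top)"

definition LES_origin :: "(real \<times> real \<Rightarrow> real \<times> real) \<Rightarrow> bool" where
  "LES_origin f \<longleftrightarrow>
     (\<exists>r>0. \<exists>M>0. \<exists>k>0. \<forall>x. is_solution f x \<and> norm (x 0) < r \<longrightarrow>
        (\<forall>t\<ge>0. norm (x t) \<le> M * exp (- k * t) * norm (x 0)))"

end

theory Submission
  imports Defs
begin

(* With varphi = phi1(eta1) + (1 + eps) phi2(eta2), the energy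
     W(eta) = int_0^eta1 phi1 + (1 + eps) int_0^eta2 phi2
   is proper and nonincreasing along the closed loop:
     W' = - beta sat(varphi) varphi - eps (1 + eps) phi2^2 <= 0,
   because the saturation has the sign of its argument.  The sublevel sets of W are
   bounded, and on a bounded square the perturbation V = W - mu phi1 phi2 with small mu > 0 is
   comparable to |eta|^2 and satisfies V' <= -c |eta|^2.  Hence every solution decays
   exponentially, with constants that are uniform on each sublevel set of W; this gives both
   global asymptotic and local exponential stability.  Solutions exist for all times because
   the (only locally Lipschitz) vector field may be clamped outside a square containing the
   initial sublevel set without changing the solution, which never leaves that set.
   Positivity of u follows from phi2 > -lambda2, sat > -1 and eps lambda2 + beta < u*. *)

lemma lipschitz_on_real_if_deriv_bounded:
  fixes f f' :: "real \<Rightarrow> real"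
  assumes "convex S" "0 \<le> C"
    and "\<And>x. x \<in> S \<Longrightarrow> (f has_real_derivative f' x) (at x within S)"
    and "\<And>x. x \<in> S \<Longrightarrow> \<bar>f' x\<bar> \<le> C"
  shows "C-lipschitz_on S f"
proof (rule bounded_derivative_imp_lipschitz[OF _ assms(1) _ assms(2)])
  fix x assume x: "x \<in> S"
  show "(f has_derivative (\<lambda>h. f' x * h)) (at x within S)"
    using assms(3)[OF x] by (simp add: has_field_derivative_def)
  show "onorm (\<lambda>h. f' x * h) \<le> C"
    using assms(4)[OF x] by (intro onorm_le) (auto simp: abs_mult intro: mult_right_mono)
qed

lemma abs_exp_minus_one_bounds:
  fixes y R :: real
  assumes "\<bar>y\<bar> \<le> R"
  shows "exp (-R) * \<bar>y\<bar> \<le> \<bar>exp y - 1\<bar>" "\<bar>exp y - 1\<bar> \<le> exp R * \<bar>y\<bar>"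
proof -
  obtain t where t: "\<bar>t\<bar> \<le> \<bar>y\<bar>" "exp y = 1 + exp t * y"
    using Maclaurin_exp_le[of y 1] by auto
  have eq: "\<bar>exp y - 1\<bar> = exp t * \<bar>y\<bar>" using t by (simp add: abs_mult)
  have "exp (-R) \<le> exp t" "exp t \<le> exp R" using t assms by auto
  then show "exp (-R) * \<bar>y\<bar> \<le> \<bar>exp y - 1\<bar>" "\<bar>exp y - 1\<bar> \<le> exp R * \<bar>y\<bar>"
    unfolding eq by (auto intro: mult_right_mono)
qed

lemma exp_minus_one_minus_bounds:
  fixes y R :: real
  assumes "\<bar>y\<bar> \<le> R"
  shows "exp (-R) * y\<^sup>2 / 2 \<le> exp y - 1 - y" "exp y - 1 - y \<le> exp R * y\<^sup>2 / 2"
proof -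
  obtain t where t: "\<bar>t\<bar> \<le> \<bar>y\<bar>" "exp y = 1 + y + exp t / 2 * y\<^sup>2"
    using Maclaurin_exp_le[of y 2] by (auto simp: numeral_2_eq_2)
  have eq: "exp y - 1 - y = exp t * y\<^sup>2 / 2" using t by simp
  have "exp (-R) \<le> exp t" "exp t \<le> exp R" using t assms by auto
  then show "exp (-R) * y\<^sup>2 / 2 \<le> exp y - 1 - y" "exp y - 1 - y \<le> exp R * y\<^sup>2 / 2"
    unfolding eq by (auto intro: divide_right_mono mult_right_mono)
qed

lemma exp_minus_one_minus_ge_abs: "\<bar>y\<bar> - 1 \<le> exp y - 1 - (y::real)"
proof (cases "y \<ge> 0")
  case True
  have "0 \<le> ((y - 1)\<^sup>2 + 1) / 2" by simp
  then show ?thesis using exp_lower_Taylor_quadratic[OF True] True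
    by (simp add: power2_eq_square field_simps)
qed (use exp_gt_zero[of y] in simp)

lemma mult_abs_le_imp_square_le:
  fixes a y z :: real
  assumes "a * \<bar>y\<bar> \<le> \<bar>z\<bar>" "0 \<le> a"
  shows "a\<^sup>2 * y\<^sup>2 \<le> z\<^sup>2"
  using abs_le_square_iff[of "a * \<bar>y\<bar>" z] assms by (simp add: power_mult_distrib)

lemma abs_le_mult_imp_square_le:
  fixes b y z :: real
  assumes "\<bar>z\<bar> \<le> b * \<bar>y\<bar>"
  shows "z\<^sup>2 \<le> b\<^sup>2 * y\<^sup>2"
proof -
  have "\<bar>z\<bar> \<le> \<bar>b * \<bar>y\<bar>\<bar>" using assms by linarith
  then have "z\<^sup>2 \<le> (b * \<bar>y\<bar>)\<^sup>2" by (simp only: abs_le_square_iff)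
  then show ?thesis by (simp add: power_mult_distrib)
qed

lemma weighted_squares_bounds:
  fixes \<eta> :: "real \<times> real"
  shows "min a b * (norm \<eta>)\<^sup>2 \<le> a * (fst \<eta>)\<^sup>2 + b * (snd \<eta>)\<^sup>2"
    and "a * (fst \<eta>)\<^sup>2 + b * (snd \<eta>)\<^sup>2 \<le> max a b * (norm \<eta>)\<^sup>2"
proof -
  have n: "(norm \<eta>)\<^sup>2 = (fst \<eta>)\<^sup>2 + (snd \<eta>)\<^sup>2" by (cases \<eta>) (simp add: norm_Pair)
  show "min a b * (norm \<eta>)\<^sup>2 \<le> a * (fst \<eta>)\<^sup>2 + b * (snd \<eta>)\<^sup>2"
    "a * (fst \<eta>)\<^sup>2 + b * (snd \<eta>)\<^sup>2 \<le> max a b * (norm \<eta>)\<^sup>2"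
    unfolding n distrib_left by (intro add_mono mult_right_mono; simp)+
qed

lemma eventually_mult_le_at_right_0:
  fixes K M :: real
  assumes "0 < M"
  shows "eventually (\<lambda>\<mu>. \<mu> * K \<le> M) (at_right 0)"
proof -
  have "((\<lambda>\<mu>. \<mu> * K) \<longlongrightarrow> 0 * K) (at_right 0)" by (intro tendsto_intros)
  from order_tendstoD(2)[OF this, of M] assms have "eventually (\<lambda>\<mu>. \<mu> * K < M) (at_right 0)" by simp
  then show ?thesis by (rule eventually_mono) simp
qed

lemma nonincreasing_if_deriv_nonpos:
  fixes h h' :: "real \<Rightarrow> real"
  assumes "0 \<le> t"
    and "\<And>s. 0 \<le> s \<Longrightarrow> s \<le> t \<Longrightarrow> (h has_real_derivative h' s) (at s within {0..})"
    and "\<And>s. 0 < s \<Longrightarrow> s < t \<Longrightarrow> h' s \<le> 0"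
  shows "h t \<le> h 0"
proof (rule DERIV_nonpos_imp_decreasing_open[OF assms(1)])
  show "continuous_on {0..t} h"
    unfolding continuous_on_eq_continuous_within
  proof
    fix s assume "s \<in> {0..t}"
    then have "continuous (at s within {0..}) h" using assms(2) by (auto intro: DERIV_continuous)
    then show "continuous (at s within {0..t}) h" by (rule continuous_within_subset) auto
  qed
next
  fix s assume s: "0 < s" "s < t"
  have "at s within {0..} = at s" using s by (intro at_within_interior) auto
  with assms(2)[of s] assms(3)[OF s] s show "\<exists>y. (h has_real_derivative y) (at s) \<and> y \<le> 0" by auto
qed

lemma has_real_derivative_compose_curve:
  fixes F :: "'a::real_normed_vector \<Rightarrow> real"
  assumes "(F has_derivative F') (at (x t))" and "(x has_vector_derivative v) (at t within S)"
  shows "((\<lambda>s. F (x s)) has_real_derivative F' v) (at t within S)"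
proof -
  have "((F \<circ> x) has_derivative (F' \<circ> (\<lambda>h. h *\<^sub>R v))) (at t within S)"
    using diff_chain_within[OF assms(2)[unfolded has_vector_derivative_def]
        has_derivative_at_withinI[OF assms(1)]] .
  moreover have "F' (h *\<^sub>R v) = F' v * h" for h
    using linear_cmul[OF has_derivative_linear[OF assms(1)]] by simp
  ultimately show ?thesis by (simp add: has_field_derivative_def o_def)
qed

section \<open>The saturated feedback\<close>

definition sat :: "real \<Rightarrow> real \<Rightarrow> real" where
  "sat dl v = v / sqrt (dl\<^sup>2 + (min 0 v)\<^sup>2)"

lemma feedback_eq_sat:
  "feedback l1 l2 us dl eps bt \<eta> = us + eps * phi2 l2 (snd \<eta>) + bt * sat dl (varphi l1 l2 eps \<eta>)"
  unfolding feedback_def sat_def by simp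

lemma closed_loop_eq_sat:
  "closed_loop l1 l2 us dl eps bt \<eta> =
    (- (1 + eps) * phi2 l2 (snd \<eta>) - bt * sat dl (varphi l1 l2 eps \<eta>),
     phi1 l1 (fst \<eta>) - eps * phi2 l2 (snd \<eta>) - bt * sat dl (varphi l1 l2 eps \<eta>))"
  unfolding closed_loop_def feedback_eq_sat Let_def by (simp add: algebra_simps)

lemma sat_mult_self_nonneg: "0 \<le> sat dl v * v"
proof -
  have "sat dl v * v = v\<^sup>2 / sqrt (dl\<^sup>2 + (min 0 v)\<^sup>2)" unfolding sat_def by (simp add: power2_eq_square)
  then show ?thesis by simp
qed

lemma sat_square_le:
  assumes "0 < dl"
  shows "dl * (sat dl v)\<^sup>2 \<le> sat dl v * v"
proof -
  define D where "D = sqrt (dl\<^sup>2 + (min 0 v)\<^sup>2)"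
  have D: "dl \<le> D" "0 < D" unfolding D_def using assms by (auto simp: add_pos_nonneg)
  have "dl * (sat dl v)\<^sup>2 = dl * v\<^sup>2 / D\<^sup>2" unfolding sat_def D_def[symmetric] by (simp add: power_divide)
  also have "\<dots> \<le> D * v\<^sup>2 / D\<^sup>2" using D by (intro divide_right_mono mult_right_mono) auto
  also have "\<dots> = sat dl v * v" unfolding sat_def D_def[symmetric] using D by (simp add: power2_eq_square)
  finally show ?thesis .
qed

lemma sat_gt_minus_one:
  assumes "0 < dl"
  shows "-1 < sat dl v"
proof (cases "0 \<le> v")
  case True
  then have "0 \<le> sat dl v" unfolding sat_def by simp
  then show ?thesis by linarith
next
  case False
  have "sqrt (v\<^sup>2) < sqrt (dl\<^sup>2 + v\<^sup>2)" using assms by (intro real_sqrt_less_mono) auto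
  with False have "- v < sqrt (dl\<^sup>2 + v\<^sup>2)" by simp
  moreover have "0 < sqrt (dl\<^sup>2 + v\<^sup>2)" using assms by (simp add: add_pos_nonneg)
  ultimately show ?thesis using False unfolding sat_def by (simp add: min_def less_divide_eq)
qed

lemma feedback_pos:
  assumes "0 < l2" "0 < dl" "0 < eps" "0 \<le> bt" "eps * l2 + bt < us"
  shows "0 < feedback l1 l2 us dl eps bt \<eta>"
proof -
  have "eps * (- l2) < eps * phi2 l2 (snd \<eta>)"
    unfolding phi2_def using assms(1,3) by (intro mult_strict_left_mono) (auto simp: algebra_simps)
  moreover have "bt * (-1) \<le> bt * sat dl (varphi l1 l2 eps \<eta>)"
    using less_imp_le[OF sat_gt_minus_one[OF assms(2)]] assms(4) by (rule mult_left_mono)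
  ultimately show ?thesis unfolding feedback_eq_sat using assms(5) by simp
qed

lemma lipschitz_on_smooth_sat:
  assumes "0 < dl"
  shows "(1 / dl)-lipschitz_on UNIV (\<lambda>x. x / sqrt (dl\<^sup>2 + x\<^sup>2))"
proof (rule lipschitz_on_real_if_deriv_bounded)
  fix x :: real
  define S where "S = sqrt (dl\<^sup>2 + x\<^sup>2)"
  have pos: "0 < dl\<^sup>2 + x\<^sup>2" using assms by (simp add: add_pos_nonneg)
  have S: "0 < S" "S\<^sup>2 = dl\<^sup>2 + x\<^sup>2" "dl \<le> S"
    unfolding S_def using pos by auto
  have "((\<lambda>x. dl\<^sup>2 + x\<^sup>2) has_real_derivative 2 * x) (at x)"
    by (auto intro!: derivative_eq_intros)
  from DERIV_chain2[OF DERIV_real_sqrt[OF pos] this]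
  have "((\<lambda>x. sqrt (dl\<^sup>2 + x\<^sup>2)) has_real_derivative inverse S / 2 * (2 * x)) (at x)"
    unfolding S_def .
  moreover have "sqrt (dl\<^sup>2 + x\<^sup>2) \<noteq> 0" using S(1) unfolding S_def by linarith
  ultimately have "((\<lambda>x. x / sqrt (dl\<^sup>2 + x\<^sup>2)) has_real_derivative
      (1 * S - inverse S / 2 * (2 * x) * x) / S ^ Suc (Suc 0)) (at x)"
    unfolding S_def by (rule DERIV_quotient[OF DERIV_ident])
  moreover have "1 * S - inverse S / 2 * (2 * x) * x = (S\<^sup>2 - x\<^sup>2) / S"
    using S(1) by (simp add: field_simps power2_eq_square)
  ultimately show "((\<lambda>x. x / sqrt (dl\<^sup>2 + x\<^sup>2)) has_real_derivative dl\<^sup>2 / S ^ 3) (at x within UNIV)"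
    using S(2) by (simp add: power3_eq_cube mult.assoc)
  have "dl\<^sup>2 / S ^ 3 \<le> dl\<^sup>2 / dl ^ 3" using S assms by (intro divide_left_mono power_mono) auto
  then show "\<bar>dl\<^sup>2 / S ^ 3\<bar> \<le> 1 / dl" using assms S(1) by (simp add: power2_eq_square power3_eq_cube)
qed (use assms in auto)

lemma sat_eq_smooth_plus_linear:
  assumes "0 < dl"
  shows "sat dl v = min 0 v / sqrt (dl\<^sup>2 + (min 0 v)\<^sup>2) + max 0 v / dl"
  using assms by (cases "0 \<le> v") (auto simp: sat_def)

lemma lipschitz_on_sat:
  assumes "0 < dl"
  shows "(2 / dl)-lipschitz_on UNIV (sat dl)"
proof -
  have min0: "1-lipschitz_on UNIV (\<lambda>v::real. min 0 v)" and max0: "1-lipschitz_on UNIV (\<lambda>v::real. max 0 v)"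
    by (auto intro!: lipschitz_onI simp: dist_real_def)
  have "((1 / dl) * 1 + (1 / dl) * 1)-lipschitz_on UNIV
      (\<lambda>v. min 0 v / sqrt (dl\<^sup>2 + (min 0 v)\<^sup>2) + (1 / dl) * max 0 v)"
    by (intro lipschitz_on_add lipschitz_on_compose2[OF min0]
        lipschitz_on_subset[OF lipschitz_on_smooth_sat[OF assms]] lipschitz_on_cmult_real_nonneg max0)
       (use assms in auto)
  then show ?thesis using sat_eq_smooth_plus_linear[OF assms] by (simp add: fun_eq_iff)
qed

lemma mem_square_iff: "\<eta> \<in> cbox (-R, -R) (R, R) \<longleftrightarrow> \<bar>fst \<eta>\<bar> \<le> R \<and> \<bar>snd \<eta>\<bar> \<le> (R::real)"
  by (cases \<eta>) (auto simp: cbox_Pair_iff abs_le_iff)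

lemma lipschitz_on_phi1:
  assumes "0 < l1"
  shows "(exp R / l1)-lipschitz_on {-R..R} (phi1 l1)"
proof (rule lipschitz_on_real_if_deriv_bounded)
  fix y assume "y \<in> {-R..R}"
  then show "\<bar>exp (- y) / l1\<bar> \<le> exp R / l1" using assms by (auto intro: divide_right_mono)
  show "(phi1 l1 has_real_derivative exp (- y) / l1) (at y within {-R..R})"
    unfolding phi1_def[abs_def] using assms by (auto intro!: derivative_eq_intros)
qed (use assms in auto)

lemma lipschitz_on_phi2:
  assumes "0 < l2"
  shows "(l2 * exp R)-lipschitz_on {-R..R} (phi2 l2)"
proof (rule lipschitz_on_real_if_deriv_bounded)
  fix y assume "y \<in> {-R..R}"
  then show "\<bar>l2 * exp y\<bar> \<le> l2 * exp R" using assms by (auto simp: abs_mult)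
  show "(phi2 l2 has_real_derivative l2 * exp y) (at y within {-R..R})"
    unfolding phi2_def[abs_def] by (auto intro!: derivative_eq_intros)
qed (use assms in auto)

lemma lipschitz_on_closed_loop_square:
  assumes "0 < l1" "0 < l2" "0 < dl"
  obtains L where "L-lipschitz_on (cbox (-R, -R) (R, R)) (closed_loop l1 l2 us dl eps bt)"
proof -
  let ?B = "cbox (-R, -R) (R, R)"
  have fst: "1-lipschitz_on ?B fst" and snd: "1-lipschitz_on ?B snd"
    by (intro lipschitz_onI; simp add: dist_fst_le dist_snd_le)+
  have img: "fst ` ?B \<subseteq> {-R..R}" "snd ` ?B \<subseteq> {-R..R}"
    by (auto simp: mem_square_iff abs_le_iff)
  have p: "(exp R / l1 * 1)-lipschitz_on ?B (\<lambda>\<eta>. phi1 l1 (fst \<eta>))"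
    and q: "(l2 * exp R * 1)-lipschitz_on ?B (\<lambda>\<eta>. phi2 l2 (snd \<eta>))"
    by (rule lipschitz_on_compose2[OF fst lipschitz_on_subset[OF lipschitz_on_phi1[OF assms(1)] img(1)]],
        rule lipschitz_on_compose2[OF snd lipschitz_on_subset[OF lipschitz_on_phi2[OF assms(2)] img(2)]])
  have s: "(2 / dl * (exp R / l1 * 1 + \<bar>1 + eps\<bar> * (l2 * exp R * 1)))-lipschitz_on ?B
      (\<lambda>\<eta>. sat dl (varphi l1 l2 eps \<eta>))"
    unfolding varphi_def
    by (rule lipschitz_on_compose2[OF lipschitz_on_add[OF p lipschitz_on_cmult_real[OF q]]
          lipschitz_on_subset[OF lipschitz_on_sat[OF assms(3)] subset_UNIV]])
  have eq: "closed_loop l1 l2 us dl eps bt = (\<lambda>\<eta>.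
      (- (1 + eps) * phi2 l2 (snd \<eta>) - bt * sat dl (varphi l1 l2 eps \<eta>),
       phi1 l1 (fst \<eta>) - eps * phi2 l2 (snd \<eta>) - bt * sat dl (varphi l1 l2 eps \<eta>)))"
    by (simp add: fun_eq_iff closed_loop_eq_sat)
  show thesis
    by (rule that, subst eq, rule lipschitz_on_Pair[OF
          lipschitz_on_diff[OF lipschitz_on_cmult_real[OF q, of "- (1 + eps)"] lipschitz_on_cmult_real[OF s, of bt]]
          lipschitz_on_diff[OF lipschitz_on_diff[OF p lipschitz_on_cmult_real[OF q, of eps]]
            lipschitz_on_cmult_real[OF s, of bt]]])
qed

section \<open>The energy\<close>

text \<open>\<open>\<integral>\<^sub>0\<^sup>\<eta>\<^sup>1 \<phi>\<^sub>1 + (1 + \<epsilon>) \<integral>\<^sub>0\<^sup>\<eta>\<^sup>2 \<phi>\<^sub>2\<close>, so that its gradient is \<open>(\<phi>\<^sub>1, (1 + \<epsilon>) \<phi>\<^sub>2)\<close>.\<close>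
definition energy :: "real \<Rightarrow> real \<Rightarrow> real \<Rightarrow> real \<times> real \<Rightarrow> real" where
  "energy l1 l2 eps \<eta> = (fst \<eta> + exp (- fst \<eta>) - 1) / l1 + (1 + eps) * l2 * (exp (snd \<eta>) - 1 - snd \<eta>)"

lemma has_derivative_phi1_fst:
  "l1 \<noteq> 0 \<Longrightarrow> ((\<lambda>\<eta>. phi1 l1 (fst \<eta>)) has_derivative (\<lambda>v. exp (- fst \<eta>) / l1 * fst v)) (at \<eta>)"
  unfolding phi1_def by (auto intro!: derivative_eq_intros simp: fun_eq_iff field_simps)

lemma has_derivative_phi2_snd:
  "((\<lambda>\<eta>. phi2 l2 (snd \<eta>)) has_derivative (\<lambda>v. l2 * exp (snd \<eta>) * snd v)) (at \<eta>)"
  unfolding phi2_def by (auto intro!: derivative_eq_intros simp: fun_eq_iff field_simps)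

lemma has_derivative_energy:
  assumes "l1 \<noteq> 0"
  shows "(energy l1 l2 eps has_derivative
     (\<lambda>v. phi1 l1 (fst \<eta>) * fst v + (1 + eps) * phi2 l2 (snd \<eta>) * snd v)) (at \<eta>)"
  unfolding energy_def[abs_def] phi1_def phi2_def using assms
  by (auto intro!: derivative_eq_intros simp: fun_eq_iff field_simps)

lemma abs_le_one_plus_energy:
  assumes "0 < l1" "0 < l2" "0 < eps"
  shows "\<bar>fst \<eta>\<bar> \<le> 1 + l1 * energy l1 l2 eps \<eta>"
    and "\<bar>snd \<eta>\<bar> \<le> 1 + energy l1 l2 eps \<eta> / ((1 + eps) * l2)"
proof -
  define E1 where "E1 = exp (- fst \<eta>) - 1 - (- fst \<eta>)"
  define E2 where "E2 = exp (snd \<eta>) - 1 - snd \<eta>"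
  have "0 \<le> E1" "0 \<le> E2"
    unfolding E1_def E2_def using exp_ge_add_one_self[of "- fst \<eta>"] exp_ge_add_one_self[of "snd \<eta>"]
    by linarith+
  moreover have "\<bar>fst \<eta>\<bar> - 1 \<le> E1" "\<bar>snd \<eta>\<bar> - 1 \<le> E2"
    unfolding E1_def E2_def using exp_minus_one_minus_ge_abs[of "- fst \<eta>"] exp_minus_one_minus_ge_abs[of "snd \<eta>"]
    by simp_all
  ultimately have E: "0 \<le> E1" "0 \<le> E2" "\<bar>fst \<eta>\<bar> - 1 \<le> E1" "\<bar>snd \<eta>\<bar> - 1 \<le> E2" by auto
  have W: "energy l1 l2 eps \<eta> = E1 / l1 + (1 + eps) * l2 * E2"
    unfolding energy_def E1_def E2_def by simp
  have "l1 * energy l1 l2 eps \<eta> = E1 + l1 * ((1 + eps) * l2 * E2)"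
    unfolding W using assms by (simp add: field_simps)
  moreover have "energy l1 l2 eps \<eta> / ((1 + eps) * l2) = E1 / l1 / ((1 + eps) * l2) + E2"
    unfolding W add_divide_distrib using assms by simp
  moreover have "0 \<le> l1 * ((1 + eps) * l2 * E2)" "0 \<le> E1 / l1 / ((1 + eps) * l2)"
    using assms E by simp_all
  ultimately have "E1 \<le> l1 * energy l1 l2 eps \<eta>" "E2 \<le> energy l1 l2 eps \<eta> / ((1 + eps) * l2)"
    by linarith+
  with E show "\<bar>fst \<eta>\<bar> \<le> 1 + l1 * energy l1 l2 eps \<eta>"
    and "\<bar>snd \<eta>\<bar> \<le> 1 + energy l1 l2 eps \<eta> / ((1 + eps) * l2)" by linarith+
qed

lemma energy_sublevel_subset_square:
  assumes "0 < l1" "0 < l2" "0 < eps"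
  obtains R where "0 < R" "\<And>\<eta>. energy l1 l2 eps \<eta> \<le> w \<Longrightarrow> \<eta> \<in> cbox (-R, -R) (R, R)"
proof
  let ?R = "1 + max 0 (max (l1 * w) (w / ((1 + eps) * l2)))"
  show "0 < ?R" by simp
  fix \<eta> assume "energy l1 l2 eps \<eta> \<le> w"
  then have "l1 * energy l1 l2 eps \<eta> \<le> l1 * w"
    and "energy l1 l2 eps \<eta> / ((1 + eps) * l2) \<le> w / ((1 + eps) * l2)"
    using assms by (auto intro: divide_right_mono)
  with abs_le_one_plus_energy[OF assms, of \<eta>] show "\<eta> \<in> cbox (-?R, -?R) (?R, ?R)"
    unfolding mem_square_iff by linarith
qed

lemma energy_quadratic_bounds:
  assumes "0 < l1" "0 < l2" "0 < eps" "\<eta> \<in> cbox (-R, -R) (R, R)"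
  shows "exp (-R) / (2 * l1) * (fst \<eta>)\<^sup>2 + (1 + eps) * l2 * exp (-R) / 2 * (snd \<eta>)\<^sup>2 \<le> energy l1 l2 eps \<eta>"
    and "energy l1 l2 eps \<eta> \<le> exp R / (2 * l1) * (fst \<eta>)\<^sup>2 + (1 + eps) * l2 * exp R / 2 * (snd \<eta>)\<^sup>2"
proof -
  have R: "\<bar>- fst \<eta>\<bar> \<le> R" "\<bar>snd \<eta>\<bar> \<le> R" using assms(4) by (auto simp: mem_square_iff)
  note b1 = exp_minus_one_minus_bounds[OF R(1)] and b2 = exp_minus_one_minus_bounds[OF R(2)]
  have c: "0 < (1 + eps) * l2" using assms by simp
  have "exp (-R) / (2 * l1) * (fst \<eta>)\<^sup>2 \<le> (fst \<eta> + exp (- fst \<eta>) - 1) / l1"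
    "(fst \<eta> + exp (- fst \<eta>) - 1) / l1 \<le> exp R / (2 * l1) * (fst \<eta>)\<^sup>2"
    using divide_right_mono[OF b1(1), of l1] divide_right_mono[OF b1(2), of l1] assms(1)
    by (simp_all add: field_simps)
  moreover have "(1 + eps) * l2 * exp (-R) / 2 * (snd \<eta>)\<^sup>2 \<le> (1 + eps) * l2 * (exp (snd \<eta>) - 1 - snd \<eta>)"
    "(1 + eps) * l2 * (exp (snd \<eta>) - 1 - snd \<eta>) \<le> (1 + eps) * l2 * exp R / 2 * (snd \<eta>)\<^sup>2"
    using mult_left_mono[OF b2(1) less_imp_le[OF c]] mult_left_mono[OF b2(2) less_imp_le[OF c]]
    by simp_all
  ultimately show "exp (-R) / (2 * l1) * (fst \<eta>)\<^sup>2 + (1 + eps) * l2 * exp (-R) / 2 * (snd \<eta>)\<^sup>2 \<le> energy l1 l2 eps \<eta>"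
    and "energy l1 l2 eps \<eta> \<le> exp R / (2 * l1) * (fst \<eta>)\<^sup>2 + (1 + eps) * l2 * exp R / 2 * (snd \<eta>)\<^sup>2"
    unfolding energy_def by linarith+
qed

lemma phi_square_bounds:
  assumes "0 < l1" "0 < l2" "\<eta> \<in> cbox (-R, -R) (R, R)"
  shows "(exp (-R) / l1)\<^sup>2 * (fst \<eta>)\<^sup>2 \<le> (phi1 l1 (fst \<eta>))\<^sup>2"
    and "(phi1 l1 (fst \<eta>))\<^sup>2 \<le> (exp R / l1)\<^sup>2 * (fst \<eta>)\<^sup>2"
    and "(l2 * exp (-R))\<^sup>2 * (snd \<eta>)\<^sup>2 \<le> (phi2 l2 (snd \<eta>))\<^sup>2"
    and "(phi2 l2 (snd \<eta>))\<^sup>2 \<le> (l2 * exp R)\<^sup>2 * (snd \<eta>)\<^sup>2"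
proof -
  have R: "\<bar>- fst \<eta>\<bar> \<le> R" "\<bar>snd \<eta>\<bar> \<le> R" using assms(3) by (auto simp: mem_square_iff)
  note b1 = abs_exp_minus_one_bounds[OF R(1)] and b2 = abs_exp_minus_one_bounds[OF R(2)]
  have p: "\<bar>phi1 l1 (fst \<eta>)\<bar> = \<bar>exp (- fst \<eta>) - 1\<bar> / l1" and q: "\<bar>phi2 l2 (snd \<eta>)\<bar> = l2 * \<bar>exp (snd \<eta>) - 1\<bar>"
    unfolding phi1_def phi2_def using assms by (simp_all add: abs_mult abs_minus_commute)
  have "exp (-R) / l1 * \<bar>fst \<eta>\<bar> \<le> \<bar>phi1 l1 (fst \<eta>)\<bar>" "\<bar>phi1 l1 (fst \<eta>)\<bar> \<le> exp R / l1 * \<bar>fst \<eta>\<bar>"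
    "l2 * exp (-R) * \<bar>snd \<eta>\<bar> \<le> \<bar>phi2 l2 (snd \<eta>)\<bar>" "\<bar>phi2 l2 (snd \<eta>)\<bar> \<le> l2 * exp R * \<bar>snd \<eta>\<bar>"
    unfolding p q using b1 b2 assms by (auto simp: divide_right_mono mult.assoc)
  then show "(exp (-R) / l1)\<^sup>2 * (fst \<eta>)\<^sup>2 \<le> (phi1 l1 (fst \<eta>))\<^sup>2"
    and "(phi1 l1 (fst \<eta>))\<^sup>2 \<le> (exp R / l1)\<^sup>2 * (fst \<eta>)\<^sup>2"
    and "(l2 * exp (-R))\<^sup>2 * (snd \<eta>)\<^sup>2 \<le> (phi2 l2 (snd \<eta>))\<^sup>2"
    and "(phi2 l2 (snd \<eta>))\<^sup>2 \<le> (l2 * exp R)\<^sup>2 * (snd \<eta>)\<^sup>2"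
    using assms by (auto intro: mult_abs_le_imp_square_le abs_le_mult_imp_square_le)
qed

lemma energy_bounded_on_unit_ball:
  assumes "0 < l1" "0 < l2" "0 < eps" "norm \<eta> < 1"
  shows "energy l1 l2 eps \<eta> \<le> exp 1 / (2 * l1) + (1 + eps) * l2 * exp 1 / 2"
proof -
  have "\<bar>fst \<eta>\<bar> \<le> norm \<eta>" "\<bar>snd \<eta>\<bar> \<le> norm \<eta>"
    using norm_fst_le[of "fst \<eta>" "snd \<eta>"] norm_snd_le[of "snd \<eta>" "fst \<eta>"] by simp_all
  with assms(4) have "\<bar>fst \<eta>\<bar> \<le> 1" "\<bar>snd \<eta>\<bar> \<le> 1" by linarith+
  then have "\<eta> \<in> cbox (-1, -1) (1, 1)" "(fst \<eta>)\<^sup>2 \<le> 1" "(snd \<eta>)\<^sup>2 \<le> 1"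
    by (auto simp: mem_square_iff abs_square_le_1)
  moreover have "exp 1 / (2 * l1) * (fst \<eta>)\<^sup>2 \<le> exp 1 / (2 * l1)"
    using calculation(2) assms(1) by (intro mult_right_le_one_le) auto
  moreover have "(1 + eps) * l2 * exp 1 / 2 * (snd \<eta>)\<^sup>2 \<le> (1 + eps) * l2 * exp 1 / 2"
    using calculation(3) assms(2,3) by (intro mult_right_le_one_le) auto
  ultimately show ?thesis using energy_quadratic_bounds(2)[OF assms(1-3), of \<eta> 1] by linarith
qed

lemma energy_deriv_closed_loop_nonpos:
  assumes "0 < eps" "0 \<le> bt"
  shows "phi1 l1 (fst \<eta>) * fst (closed_loop l1 l2 us dl eps bt \<eta>)
     + (1 + eps) * phi2 l2 (snd \<eta>) * snd (closed_loop l1 l2 us dl eps bt \<eta>) \<le> 0"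
proof -
  define p q s where "p = phi1 l1 (fst \<eta>)" "q = phi2 l2 (snd \<eta>)" "s = sat dl (varphi l1 l2 eps \<eta>)"
  have "0 \<le> s * (p + (1 + eps) * q)"
    using sat_mult_self_nonneg unfolding p_q_s_def varphi_def .
  then have "0 \<le> bt * (s * (p + (1 + eps) * q)) + eps * (1 + eps) * q\<^sup>2"
    using assms by simp
  moreover have "p * (- (1 + eps) * q - bt * s) + (1 + eps) * q * (p - eps * q - bt * s)
      = - (bt * (s * (p + (1 + eps) * q)) + eps * (1 + eps) * q\<^sup>2)"
    by (simp add: algebra_simps power2_eq_square)
  ultimately show ?thesis unfolding closed_loop_eq_sat p_q_s_def[symmetric] by simp
qed

lemma energy_nonincreasing_along:
  assumes "0 < l1" "0 < eps" "0 \<le> bt" "0 \<le> t"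
    and deriv: "\<And>s. 0 \<le> s \<Longrightarrow> (x has_vector_derivative v s) (at s within {0..})"
    and field: "\<And>s. 0 < s \<Longrightarrow> s < t \<Longrightarrow> v s = closed_loop l1 l2 us dl eps bt (x s)"
  shows "energy l1 l2 eps (x t) \<le> energy l1 l2 eps (x 0)"
proof (rule nonincreasing_if_deriv_nonpos[OF assms(4),
      where h' = "\<lambda>s. phi1 l1 (fst (x s)) * fst (v s) + (1 + eps) * phi2 l2 (snd (x s)) * snd (v s)"])
  fix s :: real assume "0 \<le> s"
  then show "((\<lambda>s. energy l1 l2 eps (x s)) has_real_derivative
      phi1 l1 (fst (x s)) * fst (v s) + (1 + eps) * phi2 l2 (snd (x s)) * snd (v s)) (at s within {0..})"
    using assms(1) deriv by (intro has_real_derivative_compose_curve[OF has_derivative_energy]) auto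
next
  fix s :: real assume "0 < s" "s < t"
  then show "phi1 l1 (fst (x s)) * fst (v s) + (1 + eps) * phi2 l2 (snd (x s)) * snd (v s) \<le> 0"
    using field energy_deriv_closed_loop_nonpos[OF assms(2,3)] by simp
qed

lemma energy_nonincreasing:
  assumes "0 < l1" "0 < eps" "0 \<le> bt" "is_solution (closed_loop l1 l2 us dl eps bt) x" "0 \<le> t"
  shows "energy l1 l2 eps (x t) \<le> energy l1 l2 eps (x 0)"
  using assms(4) unfolding is_solution_def
  by (intro energy_nonincreasing_along[OF assms(1-3,5), where v = "\<lambda>s. closed_loop l1 l2 us dl eps bt (x s)"]) auto

section \<open>A strict Lyapunov function on squares\<close>

definition lyapunov :: "real \<Rightarrow> real \<Rightarrow> real \<Rightarrow> real \<Rightarrow> real \<times> real \<Rightarrow> real" where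
  "lyapunov l1 l2 eps \<mu> \<eta> = energy l1 l2 eps \<eta> - \<mu> * phi1 l1 (fst \<eta>) * phi2 l2 (snd \<eta>)"

definition lyapunov_deriv :: "real \<Rightarrow> real \<Rightarrow> real \<Rightarrow> real \<Rightarrow> real \<times> real \<Rightarrow> real \<times> real \<Rightarrow> real" where
  "lyapunov_deriv l1 l2 eps \<mu> \<eta> v =
     phi1 l1 (fst \<eta>) * fst v + (1 + eps) * phi2 l2 (snd \<eta>) * snd v
     - \<mu> * (exp (- fst \<eta>) / l1 * fst v * phi2 l2 (snd \<eta>) + phi1 l1 (fst \<eta>) * (l2 * exp (snd \<eta>)) * snd v)"

lemma has_derivative_lyapunov:
  assumes "l1 \<noteq> 0"
  shows "(lyapunov l1 l2 eps \<mu> has_derivative lyapunov_deriv l1 l2 eps \<mu> \<eta>) (at \<eta>)"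
  unfolding lyapunov_def[abs_def] lyapunov_deriv_def
  by (auto intro!: derivative_eq_intros has_derivative_energy has_derivative_phi1_fst
      has_derivative_phi2_snd assms simp: fun_eq_iff algebra_simps)

lemma young_cross_term:
  fixes s \<phi> \<mu> A C q dl :: real
  assumes "0 < dl" "dl * s\<^sup>2 \<le> s * \<phi>" "\<bar>A\<bar> \<le> C" "0 \<le> \<mu>"
  shows "\<mu> * (A * q * s) \<le> s * \<phi> / 4 + \<mu>\<^sup>2 * C\<^sup>2 * q\<^sup>2 / dl"
proof -
  have "A * q * s \<le> \<bar>A\<bar> * (\<bar>q\<bar> * \<bar>s\<bar>)"
    by (metis abs_ge_self abs_mult mult.assoc)
  also have "\<dots> \<le> C * (\<bar>q\<bar> * \<bar>s\<bar>)" using assms(3) by (intro mult_right_mono) auto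
  finally have "\<mu> * (A * q * s) \<le> \<mu> * C * \<bar>q\<bar> * \<bar>s\<bar>"
    using mult_left_mono assms(4) by (fastforce simp: mult.assoc)
  also have "\<dots> \<le> dl * s\<^sup>2 / 4 + \<mu>\<^sup>2 * C\<^sup>2 * q\<^sup>2 / dl"
  proof -
    have "0 \<le> (dl * \<bar>s\<bar> / 2 - \<mu> * C * \<bar>q\<bar>)\<^sup>2" by simp
    then have "dl * (\<mu> * C * \<bar>q\<bar> * \<bar>s\<bar>) \<le> dl * (dl * s\<^sup>2 / 4 + \<mu>\<^sup>2 * C\<^sup>2 * q\<^sup>2 / dl)"
      using assms(1) by (simp add: algebra_simps power2_eq_square)
    then show ?thesis using assms(1) by (simp add: mult_le_cancel_left_pos)
  qed
  finally show ?thesis using assms(2) by linarith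
qed

text \<open>The left-hand side is \<open>V'\<close> along the closed loop, with \<open>p, q\<close> the values of
  \<open>\<phi>\<^sub>1, \<phi>\<^sub>2\<close>, \<open>P, Q\<close> those of their derivatives and \<open>s\<close> that of the saturation.\<close>
lemma cross_term_estimate:
  fixes p q s P Q Qm QM PM \<mu> eps bt dl :: real
  assumes sign: "0 \<le> s * (p + (1 + eps) * q)" "dl * s\<^sup>2 \<le> s * (p + (1 + eps) * q)"
    and Q: "0 \<le> Qm" "Qm \<le> Q" "Q \<le> QM" and P: "0 \<le> P" "P \<le> PM"
    and par: "0 < eps" "0 < dl" "0 \<le> bt" "0 \<le> \<mu>"
    and small: "\<mu> * QM \<le> 1 / 2" "\<mu> * ((1 + eps) * PM) \<le> eps * (1 + eps) / 6"
      "\<mu> * (eps\<^sup>2 * QM / 2) \<le> eps * (1 + eps) / 6" "\<mu> \<le> 1"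
      "\<mu> * (bt * (PM + (1 + eps) * QM)\<^sup>2 / dl) \<le> eps * (1 + eps) / 6"
  shows "p * (- (1 + eps) * q - bt * s) + (1 + eps) * q * (p - eps * q - bt * s)
         - \<mu> * (P * (- (1 + eps) * q - bt * s) * q + p * Q * (p - eps * q - bt * s))
      \<le> - (\<mu> * Qm / 2) * p\<^sup>2 - eps * (1 + eps) / 2 * q\<^sup>2"
proof -
  define \<phi> C X Z where "\<phi> = p + (1 + eps) * q" and "C = PM + (1 + eps) * QM"
    and "X = bt * (s * \<phi>)" and "Z = eps * (1 + eps) * q\<^sup>2"
  have expand: "p * (- (1 + eps) * q - bt * s) + (1 + eps) * q * (p - eps * q - bt * s)
         - \<mu> * (P * (- (1 + eps) * q - bt * s) * q + p * Q * (p - eps * q - bt * s))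
     = - X * (1 - \<mu> * Q) - Z + \<mu> * (1 + eps) * P * q\<^sup>2
       - \<mu> * Q * p\<^sup>2 + \<mu> * eps * Q * p * q + bt * (\<mu> * ((P - (1 + eps) * Q) * q * s))"
    unfolding \<phi>_def X_def Z_def by (simp add: algebra_simps power2_eq_square)
  have target: "- (\<mu> * Qm / 2) * p\<^sup>2 - eps * (1 + eps) / 2 * q\<^sup>2 = - (\<mu> * Qm * p\<^sup>2) / 2 - Z / 2"
    unfolding Z_def by simp
  have X: "0 \<le> X" using par sign unfolding \<phi>_def X_def by simp
  have "1 / 2 \<le> 1 - \<mu> * Q" using mult_left_mono[OF Q(3) par(4)] small(1) by linarith
  from mult_left_mono[OF this X] have h1: "- X * (1 - \<mu> * Q) \<le> - X / 2" by simp
  have "0 \<le> (\<mu> * Q) * (p - eps * q)\<^sup>2" using par Q by simp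
  then have h2: "\<mu> * eps * Q * p * q \<le> \<mu> * Q * p\<^sup>2 / 2 + \<mu> * (eps\<^sup>2 * Q / 2) * q\<^sup>2"
    by (simp add: algebra_simps power2_eq_square)
  have "(1 + eps) * Q \<le> (1 + eps) * QM" "0 \<le> (1 + eps) * Q" using Q par by (auto intro: mult_left_mono)
  then have "\<bar>P - (1 + eps) * Q\<bar> \<le> C" using P unfolding C_def by (simp add: abs_le_iff)
  from mult_left_mono[OF young_cross_term[OF par(2) sign(2)[folded \<phi>_def] this par(4), of q] par(3)]
  have h3: "bt * (\<mu> * ((P - (1 + eps) * Q) * q * s)) \<le> X / 4 + bt * (\<mu>\<^sup>2 * C\<^sup>2 * q\<^sup>2 / dl)"
    unfolding X_def by (simp add: distrib_left)
  have "\<mu> * ((1 + eps) * P) \<le> \<mu> * ((1 + eps) * PM)" using P par by (intro mult_left_mono) auto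
  with small(2) have "\<mu> * (1 + eps) * P \<le> eps * (1 + eps) / 6" by (simp add: mult.assoc)
  from mult_right_mono[OF this, of "q\<^sup>2"]
  have h4: "\<mu> * (1 + eps) * P * q\<^sup>2 \<le> Z / 6" unfolding Z_def by simp
  have "\<mu> * (eps\<^sup>2 * Q / 2) \<le> \<mu> * (eps\<^sup>2 * QM / 2)" using Q par by (intro divide_right_mono mult_left_mono) auto
  with small(3) have "\<mu> * (eps\<^sup>2 * Q / 2) \<le> eps * (1 + eps) / 6" by linarith
  from mult_right_mono[OF this, of "q\<^sup>2"]
  have h5: "\<mu> * (eps\<^sup>2 * Q / 2) * q\<^sup>2 \<le> Z / 6" unfolding Z_def by simp
  have "\<mu>\<^sup>2 \<le> \<mu>" using par small(4) by (simp add: power2_eq_square mult_left_le_one_le)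
  then have "bt * \<mu>\<^sup>2 * C\<^sup>2 / dl \<le> bt * \<mu> * C\<^sup>2 / dl"
    using par by (intro divide_right_mono mult_right_mono mult_left_mono) auto
  moreover have "bt * \<mu> * C\<^sup>2 / dl = \<mu> * (bt * (PM + (1 + eps) * QM)\<^sup>2 / dl)" unfolding C_def by simp
  ultimately have "bt * \<mu>\<^sup>2 * C\<^sup>2 / dl \<le> eps * (1 + eps) / 6" using small(5) by linarith
  from mult_right_mono[OF this, of "q\<^sup>2"]
  have h6: "bt * (\<mu>\<^sup>2 * C\<^sup>2 * q\<^sup>2 / dl) \<le> Z / 6" unfolding Z_def by (simp add: mult.assoc)
  have h7: "\<mu> * Qm * p\<^sup>2 \<le> \<mu> * Q * p\<^sup>2"
    using Q par by (intro mult_right_mono mult_left_mono) auto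
  show ?thesis unfolding expand target using h1 h2 h3 h4 h5 h6 h7 X by linarith
qed

lemma lyapunov_quadratic_bounds:
  assumes "0 < l1" "0 < l2" "0 < eps" "0 \<le> \<mu>" "\<eta> \<in> cbox (-R, -R) (R, R)"
    and small: "\<mu> * (exp R / l1)\<^sup>2 \<le> exp (-R) / (2 * l1)" "\<mu> * (l2 * exp R)\<^sup>2 \<le> (1 + eps) * l2 * exp (-R) / 2"
  shows "(exp (-R) / (2 * l1) * (fst \<eta>)\<^sup>2 + (1 + eps) * l2 * exp (-R) / 2 * (snd \<eta>)\<^sup>2) / 2
      \<le> lyapunov l1 l2 eps \<mu> \<eta>"
    and "lyapunov l1 l2 eps \<mu> \<eta>
      \<le> 2 * (exp R / (2 * l1) * (fst \<eta>)\<^sup>2 + (1 + eps) * l2 * exp R / 2 * (snd \<eta>)\<^sup>2)"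
proof -
  define p q where "p = phi1 l1 (fst \<eta>)" "q = phi2 l2 (snd \<eta>)"
  note W = energy_quadratic_bounds[OF assms(1-3,5)]
  note pq = phi_square_bounds[OF assms(1,2,5), folded p_q_def]
  have "\<bar>p * q\<bar> \<le> (p\<^sup>2 + q\<^sup>2) / 2"
    using zero_le_power2[of "\<bar>p\<bar> - \<bar>q\<bar>"] by (simp add: power2_eq_square algebra_simps abs_mult)
  then have "\<mu> * \<bar>p * q\<bar> \<le> \<mu> * ((p\<^sup>2 + q\<^sup>2) / 2)" by (rule mult_left_mono) (rule assms(4))
  then have "\<bar>\<mu> * (p * q)\<bar> \<le> \<mu> * ((p\<^sup>2 + q\<^sup>2) / 2)" using assms(4) by (simp add: abs_mult)
  also have "\<dots> \<le> \<mu> * (((exp R / l1)\<^sup>2 * (fst \<eta>)\<^sup>2 + (l2 * exp R)\<^sup>2 * (snd \<eta>)\<^sup>2) / 2)"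
    by (intro mult_left_mono divide_right_mono add_mono pq(2) pq(4) assms(4)) simp
  also have "\<dots> = (\<mu> * (exp R / l1)\<^sup>2 * (fst \<eta>)\<^sup>2 + \<mu> * (l2 * exp R)\<^sup>2 * (snd \<eta>)\<^sup>2) / 2"
    by (simp add: algebra_simps)
  also have "\<dots> \<le> (exp (-R) / (2 * l1) * (fst \<eta>)\<^sup>2 + (1 + eps) * l2 * exp (-R) / 2 * (snd \<eta>)\<^sup>2) / 2"
    using small by (intro divide_right_mono add_mono mult_right_mono) auto
  finally have cross: "\<bar>\<mu> * (p * q)\<bar>
      \<le> (exp (-R) / (2 * l1) * (fst \<eta>)\<^sup>2 + (1 + eps) * l2 * exp (-R) / 2 * (snd \<eta>)\<^sup>2) / 2" .
  have "0 \<le> R" using assms(5) by (auto simp: mem_square_iff)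
  then have "exp (-R) / (2 * l1) \<le> exp R / (2 * l1)" "(1 + eps) * l2 * exp (-R) / 2 \<le> (1 + eps) * l2 * exp R / 2"
    using assms(1-3) by (auto intro!: divide_right_mono mult_left_mono)
  from mult_right_mono[OF this(1) zero_le_power2] mult_right_mono[OF this(2) zero_le_power2]
  have cmp: "exp (-R) / (2 * l1) * (fst \<eta>)\<^sup>2 \<le> exp R / (2 * l1) * (fst \<eta>)\<^sup>2"
    "(1 + eps) * l2 * exp (-R) / 2 * (snd \<eta>)\<^sup>2 \<le> (1 + eps) * l2 * exp R / 2 * (snd \<eta>)\<^sup>2" .
  have V: "lyapunov l1 l2 eps \<mu> \<eta> = energy l1 l2 eps \<eta> - \<mu> * (p * q)"
    unfolding lyapunov_def p_q_def by (simp add: mult.assoc)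
  have abs: "- \<bar>\<mu> * (p * q)\<bar> \<le> \<mu> * (p * q)" "\<mu> * (p * q) \<le> \<bar>\<mu> * (p * q)\<bar>" by simp_all
  show "(exp (-R) / (2 * l1) * (fst \<eta>)\<^sup>2 + (1 + eps) * l2 * exp (-R) / 2 * (snd \<eta>)\<^sup>2) / 2
      \<le> lyapunov l1 l2 eps \<mu> \<eta>"
    using W cross abs unfolding V by (simp add: field_simps)
  show "lyapunov l1 l2 eps \<mu> \<eta>
      \<le> 2 * (exp R / (2 * l1) * (fst \<eta>)\<^sup>2 + (1 + eps) * l2 * exp R / 2 * (snd \<eta>)\<^sup>2)"
    using W cross cmp abs unfolding V by (simp add: field_simps)
qed

lemma lyapunov_deriv_closed_loop_le:
  assumes "0 < l1" "0 < l2" "0 < eps" "0 < dl" "0 \<le> bt" "0 \<le> \<mu>" "\<eta> \<in> cbox (-R, -R) (R, R)"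
    and small: "\<mu> * (l2 * exp R) \<le> 1 / 2" "\<mu> * ((1 + eps) * (exp R / l1)) \<le> eps * (1 + eps) / 6"
      "\<mu> * (eps\<^sup>2 * (l2 * exp R) / 2) \<le> eps * (1 + eps) / 6" "\<mu> \<le> 1"
      "\<mu> * (bt * (exp R / l1 + (1 + eps) * (l2 * exp R))\<^sup>2 / dl) \<le> eps * (1 + eps) / 6"
  shows "lyapunov_deriv l1 l2 eps \<mu> \<eta> (closed_loop l1 l2 us dl eps bt \<eta>)
    \<le> - (\<mu> * (l2 * exp (-R)) / 2) * (exp (-R) / l1)\<^sup>2 * (fst \<eta>)\<^sup>2
       - eps * (1 + eps) / 2 * (l2 * exp (-R))\<^sup>2 * (snd \<eta>)\<^sup>2"
proof -
  define p q s where "p = phi1 l1 (fst \<eta>)" "q = phi2 l2 (snd \<eta>)" "s = sat dl (varphi l1 l2 eps \<eta>)"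
  have \<phi>: "varphi l1 l2 eps \<eta> = p + (1 + eps) * q" unfolding varphi_def p_q_s_def ..
  have R: "\<bar>fst \<eta>\<bar> \<le> R" "\<bar>snd \<eta>\<bar> \<le> R" using assms(7) by (auto simp: mem_square_iff)
  have "lyapunov_deriv l1 l2 eps \<mu> \<eta> (closed_loop l1 l2 us dl eps bt \<eta>)
    \<le> - (\<mu> * (l2 * exp (-R)) / 2) * p\<^sup>2 - eps * (1 + eps) / 2 * q\<^sup>2"
    unfolding lyapunov_deriv_def closed_loop_eq_sat p_q_s_def[symmetric] fst_conv snd_conv
  proof (rule cross_term_estimate[OF _ _ _ _ _ _ _ assms(3,4,5,6) small])
    show "0 \<le> s * (p + (1 + eps) * q)" "dl * s\<^sup>2 \<le> s * (p + (1 + eps) * q)"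
      unfolding p_q_s_def(3) \<phi>[symmetric] by (rule sat_mult_self_nonneg, rule sat_square_le[OF assms(4)])
    show "0 \<le> l2 * exp (-R)" "l2 * exp (-R) \<le> l2 * exp (snd \<eta>)" "l2 * exp (snd \<eta>) \<le> l2 * exp R"
      "0 \<le> exp (- fst \<eta>) / l1" "exp (- fst \<eta>) / l1 \<le> exp R / l1"
      using assms(1,2) R by (auto intro: divide_right_mono)
  qed
  moreover have "(\<mu> * (l2 * exp (-R)) / 2) * ((exp (-R) / l1)\<^sup>2 * (fst \<eta>)\<^sup>2) \<le> (\<mu> * (l2 * exp (-R)) / 2) * p\<^sup>2"
    "eps * (1 + eps) / 2 * ((l2 * exp (-R))\<^sup>2 * (snd \<eta>)\<^sup>2) \<le> eps * (1 + eps) / 2 * q\<^sup>2"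
    using phi_square_bounds(1,3)[OF assms(1,2,7)] assms(2,3,6) unfolding p_q_s_def
    by (auto intro!: mult_left_mono)
  ultimately show ?thesis by (simp add: mult.assoc)
qed

lemma lyapunov_weight_exists:
  fixes l1 l2 eps dl bt R :: real
  assumes "0 < l1" "0 < l2" "0 < eps" "0 < dl"
  obtains \<mu> where "0 < \<mu>" "\<mu> * (l2 * exp R) \<le> 1 / 2"
    "\<mu> * ((1 + eps) * (exp R / l1)) \<le> eps * (1 + eps) / 6"
    "\<mu> * (eps\<^sup>2 * (l2 * exp R) / 2) \<le> eps * (1 + eps) / 6" "\<mu> \<le> 1"
    "\<mu> * (bt * (exp R / l1 + (1 + eps) * (l2 * exp R))\<^sup>2 / dl) \<le> eps * (1 + eps) / 6"
    "\<mu> * (exp R / l1)\<^sup>2 \<le> exp (-R) / (2 * l1)" "\<mu> * (l2 * exp R)\<^sup>2 \<le> (1 + eps) * l2 * exp (-R) / 2"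
proof -
  have "eventually (\<lambda>\<mu>. 0 < \<mu> \<and> \<mu> * (l2 * exp R) \<le> 1 / 2 \<and> \<mu> * ((1 + eps) * (exp R / l1)) \<le> eps * (1 + eps) / 6
      \<and> \<mu> * (eps\<^sup>2 * (l2 * exp R) / 2) \<le> eps * (1 + eps) / 6 \<and> \<mu> * 1 \<le> 1
      \<and> \<mu> * (bt * (exp R / l1 + (1 + eps) * (l2 * exp R))\<^sup>2 / dl) \<le> eps * (1 + eps) / 6
      \<and> \<mu> * (exp R / l1)\<^sup>2 \<le> exp (-R) / (2 * l1) \<and> \<mu> * (l2 * exp R)\<^sup>2 \<le> (1 + eps) * l2 * exp (-R) / 2)
    (at_right 0)"
    using assms by (intro eventually_conj eventually_at_right_less eventually_mult_le_at_right_0) auto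
  from eventually_happens'[OF _ this] obtain \<mu> where \<mu>: "0 < \<mu> \<and> \<mu> * (l2 * exp R) \<le> 1 / 2
      \<and> \<mu> * ((1 + eps) * (exp R / l1)) \<le> eps * (1 + eps) / 6
      \<and> \<mu> * (eps\<^sup>2 * (l2 * exp R) / 2) \<le> eps * (1 + eps) / 6 \<and> \<mu> * 1 \<le> 1
      \<and> \<mu> * (bt * (exp R / l1 + (1 + eps) * (l2 * exp R))\<^sup>2 / dl) \<le> eps * (1 + eps) / 6
      \<and> \<mu> * (exp R / l1)\<^sup>2 \<le> exp (-R) / (2 * l1) \<and> \<mu> * (l2 * exp R)\<^sup>2 \<le> (1 + eps) * l2 * exp (-R) / 2"
    by auto
  show thesis by (rule that[of \<mu>]) (use \<mu> in simp_all)
qed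

lemma strict_lyapunov_on_square:
  assumes "0 < l1" "0 < l2" "0 < eps" "0 < dl" "0 \<le> bt"
  obtains a b c \<mu> where "0 < a" "0 < b" "0 < c"
    "\<And>\<eta>. \<eta> \<in> cbox (-R, -R) (R, R) \<Longrightarrow> a * (norm \<eta>)\<^sup>2 \<le> lyapunov l1 l2 eps \<mu> \<eta>"
    "\<And>\<eta>. \<eta> \<in> cbox (-R, -R) (R, R) \<Longrightarrow> lyapunov l1 l2 eps \<mu> \<eta> \<le> b * (norm \<eta>)\<^sup>2"
    "\<And>\<eta>. \<eta> \<in> cbox (-R, -R) (R, R) \<Longrightarrow>
       lyapunov_deriv l1 l2 eps \<mu> \<eta> (closed_loop l1 l2 us dl eps bt \<eta>) \<le> - c * (norm \<eta>)\<^sup>2"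
proof -
  obtain \<mu> where \<mu>: "0 < \<mu>" "\<mu> * (l2 * exp R) \<le> 1 / 2"
    "\<mu> * ((1 + eps) * (exp R / l1)) \<le> eps * (1 + eps) / 6"
    "\<mu> * (eps\<^sup>2 * (l2 * exp R) / 2) \<le> eps * (1 + eps) / 6" "\<mu> \<le> 1"
    "\<mu> * (bt * (exp R / l1 + (1 + eps) * (l2 * exp R))\<^sup>2 / dl) \<le> eps * (1 + eps) / 6"
    "\<mu> * (exp R / l1)\<^sup>2 \<le> exp (-R) / (2 * l1)" "\<mu> * (l2 * exp R)\<^sup>2 \<le> (1 + eps) * l2 * exp (-R) / 2"
    using lyapunov_weight_exists[OF assms(1-4), where R = R and bt = bt] by blast
  show thesis
  proof (rule that)
    fix \<eta> assume \<eta>: "\<eta> \<in> cbox (-R, -R) (R, R)"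
    note V = lyapunov_quadratic_bounds[OF assms(1-3) less_imp_le[OF \<mu>(1)] \<eta> \<mu>(7,8)]
    from weighted_squares_bounds(1)[where a = "exp (-R) / (2 * l1)" and b = "(1 + eps) * l2 * exp (-R) / 2"]
    have "min (exp (-R) / (2 * l1)) ((1 + eps) * l2 * exp (-R) / 2) / 2 * (norm \<eta>)\<^sup>2
      \<le> (exp (-R) / (2 * l1) * (fst \<eta>)\<^sup>2 + (1 + eps) * l2 * exp (-R) / 2 * (snd \<eta>)\<^sup>2) / 2"
      by simp
    then show "min (exp (-R) / (2 * l1)) ((1 + eps) * l2 * exp (-R) / 2) / 2 * (norm \<eta>)\<^sup>2
      \<le> lyapunov l1 l2 eps \<mu> \<eta>" using V(1) by (rule order_trans)
    from mult_left_mono[OF weighted_squares_bounds(2)[where a = "exp R / (2 * l1)" and b = "(1 + eps) * l2 * exp R / 2"], of 2]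
    have "2 * (exp R / (2 * l1) * (fst \<eta>)\<^sup>2 + (1 + eps) * l2 * exp R / 2 * (snd \<eta>)\<^sup>2)
      \<le> 2 * max (exp R / (2 * l1)) ((1 + eps) * l2 * exp R / 2) * (norm \<eta>)\<^sup>2"
      by (simp add: mult.assoc)
    with V(2) show "lyapunov l1 l2 eps \<mu> \<eta> \<le> 2 * max (exp R / (2 * l1)) ((1 + eps) * l2 * exp R / 2) * (norm \<eta>)\<^sup>2"
      by (rule order_trans)
    have "lyapunov_deriv l1 l2 eps \<mu> \<eta> (closed_loop l1 l2 us dl eps bt \<eta>)
      \<le> - ((\<mu> * (l2 * exp (-R)) / 2) * (exp (-R) / l1)\<^sup>2 * (fst \<eta>)\<^sup>2
          + eps * (1 + eps) / 2 * (l2 * exp (-R))\<^sup>2 * (snd \<eta>)\<^sup>2)"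
      using lyapunov_deriv_closed_loop_le[OF assms less_imp_le[OF \<mu>(1)] \<eta> \<mu>(2-6)] by simp
    also have "\<dots> \<le> - min ((\<mu> * (l2 * exp (-R)) / 2) * (exp (-R) / l1)\<^sup>2)
                           (eps * (1 + eps) / 2 * (l2 * exp (-R))\<^sup>2) * (norm \<eta>)\<^sup>2"
      using weighted_squares_bounds(1)[where a = "(\<mu> * (l2 * exp (-R)) / 2) * (exp (-R) / l1)\<^sup>2"
          and b = "eps * (1 + eps) / 2 * (l2 * exp (-R))\<^sup>2" and \<eta> = \<eta>] unfolding mult_minus_left by linarith
    finally show "lyapunov_deriv l1 l2 eps \<mu> \<eta> (closed_loop l1 l2 us dl eps bt \<eta>)
      \<le> - min ((\<mu> * (l2 * exp (-R)) / 2) * (exp (-R) / l1)\<^sup>2)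
              (eps * (1 + eps) / 2 * (l2 * exp (-R))\<^sup>2) * (norm \<eta>)\<^sup>2" .
  qed (use assms \<mu>(1) in \<open>auto simp: less_max_iff_disj\<close>)
qed

lemma exponential_decay_of_lyapunov:
  fixes v v' y :: "real \<Rightarrow> real"
  assumes "0 < a" "0 < b" "0 < c" "0 \<le> t"
    and deriv: "\<And>s. 0 \<le> s \<Longrightarrow> (v has_real_derivative v' s) (at s within {0..})"
    and decr: "\<And>s. 0 \<le> s \<Longrightarrow> v' s \<le> - c * y s"
    and lower: "\<And>s. 0 \<le> s \<Longrightarrow> a * y s \<le> v s" and upper: "\<And>s. 0 \<le> s \<Longrightarrow> v s \<le> b * y s"
  shows "y t \<le> b / a * exp (- (c / b) * t) * y 0"
proof -
  define k where "k = c / b"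
  have "v t * exp (k * t) \<le> v 0 * exp (k * 0)"
  proof (rule nonincreasing_if_deriv_nonpos[where h' = "\<lambda>s. (v' s + k * v s) * exp (k * s)"])
    fix s :: real assume "0 \<le> s"
    then show "((\<lambda>s. v s * exp (k * s)) has_real_derivative (v' s + k * v s) * exp (k * s)) (at s within {0..})"
      by (auto intro!: derivative_eq_intros deriv simp: algebra_simps)
  next
    fix s :: real assume "0 < s"
    have "k * v s \<le> k * (b * y s)" using upper[of s] \<open>0 < s\<close> assms(2,3) by (intro mult_left_mono) (auto simp: k_def)
    also have "\<dots> = c * y s" using assms(2) by (simp add: k_def)
    finally show "(v' s + k * v s) * exp (k * s) \<le> 0"
      using decr[of s] \<open>0 < s\<close> by (simp add: mult_nonpos_nonneg)
  qed (use assms(4) in simp)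
  then have "v t * exp (k * t) * exp (- k * t) \<le> v 0 * exp (- k * t)" by (intro mult_right_mono) auto
  then have "v t \<le> v 0 * exp (- k * t)" by (simp add: mult.assoc flip: exp_add)
  also have "\<dots> \<le> b * y 0 * exp (- k * t)" using upper[of 0] by (intro mult_right_mono) auto
  finally have "a * y t \<le> b * y 0 * exp (- k * t)" using lower[OF assms(4)] by linarith
  then show ?thesis using assms(1) unfolding k_def by (simp add: field_simps)
qed

lemma closed_loop_exponential_decay_on_sublevel:
  assumes "0 < l1" "0 < l2" "0 < eps" "0 < dl" "0 \<le> bt"
  obtains M k where "0 < M" "0 < k"
    "\<And>x t. is_solution (closed_loop l1 l2 us dl eps bt) x \<Longrightarrow> energy l1 l2 eps (x 0) \<le> w \<Longrightarrow> 0 \<le> t \<Longrightarrow>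
       norm (x t) \<le> M * exp (- k * t) * norm (x 0)"
proof -
  let ?f = "closed_loop l1 l2 us dl eps bt"
  obtain R where sublevel: "\<And>\<eta>. energy l1 l2 eps \<eta> \<le> w \<Longrightarrow> \<eta> \<in> cbox (-R, -R) (R, R)"
    using energy_sublevel_subset_square[OF assms(1-3)] by blast
  obtain a b c \<mu> where abc: "0 < a" "0 < b" "0 < c"
    and V: "\<And>\<eta>. \<eta> \<in> cbox (-R, -R) (R, R) \<Longrightarrow> a * (norm \<eta>)\<^sup>2 \<le> lyapunov l1 l2 eps \<mu> \<eta>"
      "\<And>\<eta>. \<eta> \<in> cbox (-R, -R) (R, R) \<Longrightarrow> lyapunov l1 l2 eps \<mu> \<eta> \<le> b * (norm \<eta>)\<^sup>2"
      "\<And>\<eta>. \<eta> \<in> cbox (-R, -R) (R, R) \<Longrightarrow> lyapunov_deriv l1 l2 eps \<mu> \<eta> (?f \<eta>) \<le> - c * (norm \<eta>)\<^sup>2"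
    using strict_lyapunov_on_square[OF assms, where R = R and us = us] by blast
  show thesis
  proof (rule that[of "sqrt (b / a)" "c / (2 * b)"])
    fix x and t :: real assume x: "is_solution ?f x" and w: "energy l1 l2 eps (x 0) \<le> w" and t: "0 \<le> t"
    have sq: "x s \<in> cbox (-R, -R) (R, R)" if "0 \<le> s" for s
      using sublevel order_trans[OF energy_nonincreasing[OF assms(1,3,5) x that] w] by blast
    have "(norm (x t))\<^sup>2 \<le> b / a * exp (- (c / b) * t) * (norm (x 0))\<^sup>2"
    proof (rule exponential_decay_of_lyapunov[OF abc t, where v = "\<lambda>s. lyapunov l1 l2 eps \<mu> (x s)"
          and v' = "\<lambda>s. lyapunov_deriv l1 l2 eps \<mu> (x s) (?f (x s))" and y = "\<lambda>s. (norm (x s))\<^sup>2"])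
      fix s :: real assume s: "0 \<le> s"
      then show "((\<lambda>s. lyapunov l1 l2 eps \<mu> (x s)) has_real_derivative lyapunov_deriv l1 l2 eps \<mu> (x s) (?f (x s)))
          (at s within {0..})"
        using x assms(1) unfolding is_solution_def
        by (intro has_real_derivative_compose_curve[OF has_derivative_lyapunov]) auto
      show "lyapunov_deriv l1 l2 eps \<mu> (x s) (?f (x s)) \<le> - c * (norm (x s))\<^sup>2" by (rule V(3)[OF sq[OF s]])
      show "a * (norm (x s))\<^sup>2 \<le> lyapunov l1 l2 eps \<mu> (x s)" by (rule V(1)[OF sq[OF s]])
      show "lyapunov l1 l2 eps \<mu> (x s) \<le> b * (norm (x s))\<^sup>2" by (rule V(2)[OF sq[OF s]])
    qed
    also have "\<dots> = (sqrt (b / a) * exp (- (c / (2 * b)) * t) * norm (x 0))\<^sup>2"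
    proof -
      have "- (c / (2 * b)) * t + - (c / (2 * b)) * t = - (c / b) * t" by (simp add: field_simps)
      then have "(exp (- (c / (2 * b)) * t))\<^sup>2 = exp (- (c / b) * t)"
        unfolding power2_eq_square exp_add[symmetric] by simp
      then show ?thesis using abc by (simp add: power_mult_distrib)
    qed
    finally show "norm (x t) \<le> sqrt (b / a) * exp (- (c / (2 * b)) * t) * norm (x 0)"
      by (rule power2_le_imp_le) (use abc in simp)
  qed (use abc in auto)
qed

section \<open>Global existence of solutions\<close>

lemma continuous_on_integral_upto_max0:
  fixes h :: "real \<Rightarrow> 'a::banach"
  assumes "continuous_on UNIV h"
  shows "continuous_on UNIV (\<lambda>t. integral {0..max 0 t} h)"
proof (rule continuous_at_imp_continuous_on, intro ballI)
  fix t :: real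
  define b where "b = \<bar>t\<bar> + 1"
  have "continuous_on {0..b} (\<lambda>u. integral {0..u} h)"
    by (intro indefinite_integral_continuous_1 integrable_continuous_interval continuous_on_subset[OF assms]) auto
  then have "continuous_on {-b..b} (\<lambda>t. integral {0..max 0 t} h)"
    by (rule continuous_on_compose2[where f = "\<lambda>t. max 0 t"]) (auto intro!: continuous_intros simp: b_def)
  moreover have "t \<in> interior {-b..b}" unfolding b_def by auto
  ultimately show "isCont (\<lambda>t. integral {0..max 0 t} h) t" by (rule continuous_on_interior)
qed

lemma has_integral_exp_mult:
  fixes K t :: real
  assumes "K \<noteq> 0" "0 \<le> t"
  shows "((\<lambda>s. exp (K * s)) has_integral (exp (K * t) - 1) / K) {0..t}"
proof -
  have "((\<lambda>s. exp (K * s)) has_integral exp (K * t) / K - exp (K * 0) / K) {0..t}"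
    using assms by (intro fundamental_theorem_of_calculus)
      (auto intro!: derivative_eq_intros simp flip: has_real_derivative_iff_has_vector_derivative)
  then show ?thesis by (simp add: diff_divide_distrib)
qed

text \<open>The Picard operator in the variable \<open>w(t) = e\<^sup>-\<^sup>K\<^sup>t x(t)\<close>, \<open>t \<ge> 0\<close>: the weight makes it a
  contraction for the supremum norm on the whole half-line, with factor \<open>L / K\<close>.\<close>

definition picard_step :: "('a::banach \<Rightarrow> 'a) \<Rightarrow> real \<Rightarrow> 'a \<Rightarrow> (real \<Rightarrow>\<^sub>C 'a) \<Rightarrow> real \<Rightarrow> 'a" where
  "picard_step g K z w t =
     exp (- K * max 0 t) *\<^sub>R (z + integral {0..max 0 t} (\<lambda>s. g (exp (K * s) *\<^sub>R w s)))"

lemma continuous_on_picard_integrand: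
  fixes g :: "'a::banach \<Rightarrow> 'b::topological_space" and w :: "real \<Rightarrow>\<^sub>C 'a"
  assumes "continuous_on UNIV g"
  shows "continuous_on S (\<lambda>s. g (exp (K * s) *\<^sub>R apply_bcontfun w s))"
  by (rule continuous_on_compose2[OF assms]) (auto intro!: continuous_intros)

lemma picard_step_in_bcontfun:
  assumes "continuous_on UNIV g" "\<And>a. norm (g a) \<le> G" "0 < K"
  shows "picard_step g K z w \<in> bcontfun"
proof (rule bcontfun_normI)
  note gw = continuous_on_picard_integrand[OF assms(1)]
  show "continuous_on UNIV (picard_step g K z w)"
    unfolding picard_step_def[abs_def] by (intro continuous_intros continuous_on_integral_upto_max0 gw)
  fix t :: real
  define u where "u = max 0 t"
  have u: "0 \<le> u" unfolding u_def by simp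
  have G: "0 \<le> G" using assms(2)[of 0] norm_ge_zero[of "g 0"] by linarith
  have "K * u \<le> exp (K * u)" using exp_ge_add_one_self[of "K * u"] by linarith
  then have "K * u * exp (- K * u) \<le> exp (K * u) * exp (- K * u)" by (rule mult_right_mono) simp
  then have ue: "u * exp (- K * u) \<le> 1 / K" using assms(3) by (simp add: field_simps flip: exp_add)
  have "norm (picard_step g K z w t)
      = exp (- K * u) * norm (z + integral {0..u} (\<lambda>s. g (exp (K * s) *\<^sub>R w s)))"
    unfolding picard_step_def u_def by simp
  also have "\<dots> \<le> exp (- K * u) * (norm z + G * u)"
  proof -
    have "norm (integral {0..u} (\<lambda>s. g (exp (K * s) *\<^sub>R w s))) \<le> G * (u - 0)"
      by (rule integral_bound[OF u gw]) (rule assms(2))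
    then have "norm (z + integral {0..u} (\<lambda>s. g (exp (K * s) *\<^sub>R w s))) \<le> norm z + G * u"
      using norm_triangle_ineq[of z "integral {0..u} (\<lambda>s. g (exp (K * s) *\<^sub>R w s))"] by simp
    then show ?thesis by (rule mult_left_mono) simp
  qed
  also have "\<dots> = exp (- K * u) * norm z + G * (u * exp (- K * u))" by (simp add: algebra_simps)
  also have "\<dots> \<le> 1 * norm z + G * (1 / K)"
    using ue G u assms(3) by (intro add_mono mult_right_mono mult_left_mono) auto
  finally show "norm (picard_step g K z w t) \<le> norm z + G / K" by simp
qed

lemma dist_picard_step_le:
  assumes "L-lipschitz_on UNIV g" "0 < K"
  shows "dist (picard_step g K z w1 t) (picard_step g K z w2 t) \<le> L / K * dist w1 w2"
proof -
  define u D where "u = max 0 t" and "D = dist w1 w2"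
  have u: "0 \<le> u" unfolding u_def by simp
  have L: "0 \<le> L" using lipschitz_on_nonneg[OF assms(1)] .
  note gw = continuous_on_picard_integrand[OF lipschitz_on_continuous_on[OF assms(1)]]
  have i: "(\<lambda>s. g (exp (K * s) *\<^sub>R w1 s)) integrable_on {0..u}" "(\<lambda>s. g (exp (K * s) *\<^sub>R w2 s)) integrable_on {0..u}"
    by (rule integrable_continuous_interval[OF gw])+
  have "norm (g (exp (K * s) *\<^sub>R w1 s) - g (exp (K * s) *\<^sub>R w2 s)) \<le> L * D * exp (K * s)" for s
  proof -
    have "norm (g (exp (K * s) *\<^sub>R w1 s) - g (exp (K * s) *\<^sub>R w2 s))
        \<le> L * norm (exp (K * s) *\<^sub>R w1 s - exp (K * s) *\<^sub>R w2 s)"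
      by (rule lipschitz_on_normD[OF assms(1)]) auto
    also have "\<dots> = L * (exp (K * s) * dist (w1 s) (w2 s))"
      by (simp add: dist_norm flip: scaleR_diff_right)
    also have "\<dots> \<le> L * (exp (K * s) * D)" unfolding D_def using L by (intro mult_left_mono dist_bounded) auto
    finally show ?thesis by (simp add: algebra_simps)
  qed
  then have "norm (integral {0..u} (\<lambda>s. g (exp (K * s) *\<^sub>R w1 s) - g (exp (K * s) *\<^sub>R w2 s)))
      \<le> integral {0..u} (\<lambda>s. L * D * exp (K * s))"
    by (intro integral_norm_bound_integral integrable_diff i integrable_continuous_interval continuous_intros)
  also have "\<dots> = L * D * ((exp (K * u) - 1) / K)"
    using integral_unique[OF has_integral_exp_mult[OF _ u], of K] assms(2) by simp
  finally have I: "norm (integral {0..u} (\<lambda>s. g (exp (K * s) *\<^sub>R w1 s)) - integral {0..u} (\<lambda>s. g (exp (K * s) *\<^sub>R w2 s)))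
      \<le> L * D * ((exp (K * u) - 1) / K)"
    using integral_diff[OF i] by simp
  have "dist (picard_step g K z w1 t) (picard_step g K z w2 t)
      = exp (- K * u) * norm (integral {0..u} (\<lambda>s. g (exp (K * s) *\<^sub>R w1 s)) - integral {0..u} (\<lambda>s. g (exp (K * s) *\<^sub>R w2 s)))"
    unfolding picard_step_def u_def[symmetric] dist_norm by (simp flip: scaleR_diff_right)
  also have "\<dots> \<le> exp (- K * u) * (L * D * ((exp (K * u) - 1) / K))" using I by (intro mult_left_mono) auto
  also have "\<dots> = L * D / K * (1 - exp (- K * u))" using assms(2) by (simp add: field_simps exp_minus)
  also have "\<dots> \<le> L * D / K" using assms(2) L by (intro mult_left_le) (auto simp: D_def)
  finally show ?thesis unfolding D_def by simp
qed

lemma has_vector_derivative_if_integral_equation: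
  fixes h :: "real \<Rightarrow> 'a::banach"
  assumes "continuous_on UNIV h" "\<And>t. 0 \<le> t \<Longrightarrow> x t = z + integral {0..t} h" "0 \<le> t"
  shows "(x has_vector_derivative h t) (at t within {0..})"
proof -
  have "((\<lambda>u. integral {0..u} h) has_vector_derivative h t) (at t within {0..t + 1})"
    by (rule integral_has_vector_derivative[OF continuous_on_subset[OF assms(1)]]) (use assms(3) in auto)
  from has_vector_derivative_add[OF has_vector_derivative_const this]
  have "((\<lambda>u. z + integral {0..u} h) has_vector_derivative h t) (at t within {0..t + 1})" by simp
  moreover have "at t within {0..t + 1} = at t within {0..}"
    by (rule at_within_nhd[where S = "{..<t + 1}"]) auto
  ultimately have "((\<lambda>u. z + integral {0..u} h) has_vector_derivative h t) (at t within {0..})" by simp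
  then show ?thesis
    by (rule has_vector_derivative_transform_within[OF _ zero_less_one]) (use assms(2,3) in auto)
qed

lemma lipschitz_ode_solution_exists:
  fixes g :: "'a::banach \<Rightarrow> 'a"
  assumes lip: "L-lipschitz_on UNIV g" and bnd: "bounded (range g)"
  shows "\<exists>x. x 0 = z \<and> (\<forall>t\<ge>0. (x has_vector_derivative g (x t)) (at t within {0..}))"
proof -
  define K where "K = 2 * L + 1"
  have L: "0 \<le> L" using lipschitz_on_nonneg[OF lip] .
  then have K: "0 < K" "L / K < 1" unfolding K_def by auto
  have gc: "continuous_on UNIV g" by (rule lipschitz_on_continuous_on[OF lip])
  obtain G where G: "\<And>a. norm (g a) \<le> G" using bnd by (auto simp: bounded_iff)
  define \<Psi> where "\<Psi> w = Bcontfun (picard_step g K z w)" for w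
  have \<Psi>: "apply_bcontfun (\<Psi> w) = picard_step g K z w" for w
    unfolding \<Psi>_def by (rule Bcontfun_inverse[OF picard_step_in_bcontfun[OF gc G K(1)]])
  have "\<forall>w1 w2. dist (\<Psi> w1) (\<Psi> w2) \<le> L / K * dist w1 w2"
    by (intro allI dist_bound) (unfold \<Psi>, rule dist_picard_step_le[OF lip K(1)])
  from banach_fix_type[OF _ K(2) this] L K(1) obtain w where w: "\<Psi> w = w" by auto
  define x where "x t = exp (K * t) *\<^sub>R apply_bcontfun w t" for t
  have x: "x t = z + integral {0..t} (\<lambda>s. g (x s))" if "0 \<le> t" for t
  proof -
    have "apply_bcontfun w = picard_step g K z w" using \<Psi>[of w] by (simp only: w)
    from fun_cong[OF this, of t] have "x t = exp (K * t) *\<^sub>R (exp (- K * t) *\<^sub>R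
        (z + integral {0..t} (\<lambda>s. g (exp (K * s) *\<^sub>R apply_bcontfun w s))))"
      unfolding x_def picard_step_def using that by simp
    also have "\<dots> = z + integral {0..t} (\<lambda>s. g (x s))" unfolding x_def by (simp flip: exp_add)
    finally show ?thesis .
  qed
  have "continuous_on UNIV (\<lambda>s. g (x s))"
    unfolding x_def by (rule continuous_on_picard_integrand[OF gc])
  then have "\<forall>t\<ge>0. (x has_vector_derivative g (x t)) (at t within {0..})"
    using has_vector_derivative_if_integral_equation[where h = "\<lambda>s. g (x s)"] x by blast
  moreover have "x 0 = z" using x[of 0] by simp
  ultimately show ?thesis by blast
qed

lemma forward_invariant_if_continuous:
  fixes x :: "real \<Rightarrow> 'a::topological_space"
  assumes "continuous_on {0..} x" "open U" "C \<subseteq> U"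
    and step: "\<And>t. 0 \<le> t \<Longrightarrow> (\<forall>s. 0 \<le> s \<and> s < t \<longrightarrow> x s \<in> U) \<Longrightarrow> x t \<in> C"
    and "0 \<le> t"
  shows "x t \<in> C"
proof -
  define B where "B = {t. 0 \<le> t \<and> x t \<notin> U}"
  have "B = {}"
  proof (rule ccontr)
    assume "B \<noteq> {}"
    have bdd: "bdd_below B" unfolding B_def by (rule bdd_belowI[of _ 0]) auto
    define t0 where "t0 = Inf B"
    have t0: "0 \<le> t0" unfolding t0_def using \<open>B \<noteq> {}\<close> by (intro cInf_greatest) (auto simp: B_def)
    have "x s \<in> U" if "0 \<le> s" "s < t0" for s
      using cInf_lower[OF _ bdd, of s] that unfolding t0_def B_def by force
    with step[OF t0] assms(3) have "x t0 \<in> U" by auto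
    obtain A where A: "open A" "A \<inter> {0..} = x -` U \<inter> {0..}"
      using assms(1,2) continuous_on_open_invariant by metis
    with \<open>x t0 \<in> U\<close> t0 have "t0 \<in> A" by auto
    then obtain e where e: "0 < e" "ball t0 e \<subseteq> A" using \<open>open A\<close> openE by blast
    obtain b where b: "b \<in> B" "b < t0 + e"
      using cInf_less_iff[OF \<open>B \<noteq> {}\<close> bdd, of "t0 + e"] e(1) unfolding t0_def by auto
    have "t0 \<le> b" unfolding t0_def by (rule cInf_lower[OF b(1) bdd])
    with b e have "b \<in> A \<inter> {0..}" using t0 by (auto simp: dist_real_def)
    with A b(1) show False unfolding B_def by auto
  qed
  then show ?thesis using step[OF assms(5)] unfolding B_def by auto
qed

lemma lipschitz_bounded_clamp_extension:
  fixes f :: "'a::euclidean_space \<Rightarrow> 'b::real_normed_vector"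
  assumes "L-lipschitz_on (cbox a b) f" "\<And>i. i \<in> Basis \<Longrightarrow> a \<bullet> i \<le> b \<bullet> i"
  shows "L-lipschitz_on UNIV (\<lambda>x. f (clamp a b x))" and "bounded (range (\<lambda>x. f (clamp a b x)))"
proof -
  have "1-lipschitz_on UNIV (clamp a b)"
    by (rule lipschitz_onI) (simp_all add: dist_clamps_le_dist_args)
  moreover have "clamp a b ` UNIV \<subseteq> cbox a b" using assms(2) by auto
  ultimately have "(L * 1)-lipschitz_on UNIV (\<lambda>x. f (clamp a b x))"
    by (rule lipschitz_on_compose2[OF _ lipschitz_on_subset[OF assms(1)]])
  then show "L-lipschitz_on UNIV (\<lambda>x. f (clamp a b x))" by simp
  show "bounded (range (\<lambda>x. f (clamp a b x)))"
    using assms(1)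
    by (intro clamp_bounded compact_imp_bounded compact_continuous_image compact_cbox lipschitz_on_continuous_on)
qed

lemma closed_loop_solution_exists:
  assumes "0 < l1" "0 < l2" "0 < eps" "0 < dl" "0 \<le> bt"
  shows "\<exists>x. is_solution (closed_loop l1 l2 us dl eps bt) x \<and> x 0 = x0"
proof -
  let ?f = "closed_loop l1 l2 us dl eps bt"
  obtain R0 where R0: "0 < R0" "\<And>\<eta>. energy l1 l2 eps \<eta> \<le> energy l1 l2 eps x0 \<Longrightarrow> \<eta> \<in> cbox (-R0, -R0) (R0, R0)"
    using energy_sublevel_subset_square[OF assms(1-3)] by blast
  define R where "R = R0 + 1"
  let ?B = "cbox (-R, -R) (R, R)"
  obtain L where L: "L-lipschitz_on ?B ?f"
    using lipschitz_on_closed_loop_square[OF assms(1,2,4)] by blast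
  define g where "g \<eta> = ?f (clamp (-R, -R) (R, R) \<eta>)" for \<eta>
  have "\<And>i. i \<in> Basis \<Longrightarrow> (-R, -R) \<bullet> i \<le> (R, R) \<bullet> i"
    using R0(1) unfolding R_def by (auto simp: Basis_prod_def)
  note lip = lipschitz_bounded_clamp_extension(1)[OF L this, folded g_def]
    and bnd = lipschitz_bounded_clamp_extension(2)[OF L this, folded g_def]
  obtain x where x0: "x 0 = x0" and x: "\<And>t. 0 \<le> t \<Longrightarrow> (x has_vector_derivative g (x t)) (at t within {0..})"
    using lipschitz_ode_solution_exists[OF lip bnd, of x0] by blast
  have g: "g \<eta> = ?f \<eta>" if "\<eta> \<in> ?B" for \<eta> unfolding g_def using that by simp
  have inside: "x t \<in> cbox (-R0, -R0) (R0, R0)" if "0 \<le> t" for t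
  proof (rule forward_invariant_if_continuous[where U = "{\<eta>. \<bar>fst \<eta>\<bar> < R \<and> \<bar>snd \<eta>\<bar> < R}", OF _ _ _ _ that])
    show "continuous_on {0..} x"
      unfolding continuous_on_eq_continuous_within
    proof
      fix s :: real assume "s \<in> {0..}"
      then show "continuous (at s within {0..}) x" by (intro has_vector_derivative_continuous[OF x]) simp
    qed
    show "open {\<eta>. \<bar>fst \<eta>\<bar> < R \<and> \<bar>snd \<eta>\<bar> < (R::real)}"
      by (intro open_Collect_conj open_Collect_less continuous_intros)
    show "cbox (-R0, -R0) (R0, R0) \<subseteq> {\<eta>. \<bar>fst \<eta>\<bar> < R \<and> \<bar>snd \<eta>\<bar> < R}"
      unfolding R_def by (auto simp: mem_square_iff)
    fix t :: real assume t: "0 \<le> t" and before: "\<forall>s. 0 \<le> s \<and> s < t \<longrightarrow> x s \<in> {\<eta>. \<bar>fst \<eta>\<bar> < R \<and> \<bar>snd \<eta>\<bar> < R}"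
    have "g (x s) = ?f (x s)" if "0 < s" "s < t" for s
    proof (rule g)
      from before that have "\<bar>fst (x s)\<bar> < R \<and> \<bar>snd (x s)\<bar> < R" by simp
      then show "x s \<in> ?B" by (simp add: mem_square_iff)
    qed
    with x have "energy l1 l2 eps (x t) \<le> energy l1 l2 eps (x 0)"
      by (intro energy_nonincreasing_along[OF assms(1,3,5) t, where v = "\<lambda>s. g (x s)"])
    then show "x t \<in> cbox (-R0, -R0) (R0, R0)" using R0(2) x0 by simp
  qed
  have "cbox (-R0, -R0) (R0, R0) \<subseteq> ?B" unfolding R_def by (auto simp: cbox_Pair_eq)
  with inside x g have "is_solution ?f x" unfolding is_solution_def by (metis subsetD)
  with x0 show ?thesis by blast
qed

section \<open>Stability\<close>

lemma stable_if_LES_origin: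
  assumes "LES_origin f"
  shows "\<forall>e>0. \<exists>d>0. \<forall>x. is_solution f x \<and> norm (x 0) < d \<longrightarrow> (\<forall>t\<ge>0. norm (x t) < e)"
proof (intro allI impI)
  fix e :: real assume "0 < e"
  obtain r M k where "0 < r" "0 < M" "0 < k" and bound: "\<And>x t. is_solution f x \<Longrightarrow> norm (x 0) < r \<Longrightarrow> 0 \<le> t
      \<Longrightarrow> norm (x t) \<le> M * exp (- k * t) * norm (x 0)"
    using assms unfolding LES_origin_def by blast
  show "\<exists>d>0. \<forall>x. is_solution f x \<and> norm (x 0) < d \<longrightarrow> (\<forall>t\<ge>0. norm (x t) < e)"
  proof (intro exI[of _ "min r (e / M)"] conjI allI impI)
    fix x t assume x: "is_solution f x \<and> norm (x 0) < min r (e / M)" and t: "0 \<le> (t::real)"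
    have "norm (x t) \<le> M * exp (- k * t) * norm (x 0)" using bound x t by simp
    also have "\<dots> \<le> M * norm (x 0)"
    proof (rule mult_right_mono)
      show "M * exp (- k * t) \<le> M" using \<open>0 < M\<close> \<open>0 < k\<close> t by (intro mult_right_le_one_le) auto
    qed simp
    also have "\<dots> < e" using x \<open>0 < M\<close> by (simp add: field_simps)
    finally show "norm (x t) < e" .
  qed (use \<open>0 < r\<close> \<open>0 < M\<close> \<open>0 < e\<close> in simp)
qed

lemma tendsto_zero_if_exponential_bound:
  fixes x :: "real \<Rightarrow> 'a::real_normed_vector"
  assumes "0 < k" "\<And>t. 0 \<le> t \<Longrightarrow> norm (x t) \<le> C * exp (- k * t)"
  shows "(x \<longlongrightarrow> 0) at_top"
proof (rule Lim_null_comparison)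
  show "eventually (\<lambda>t. norm (x t) \<le> C * exp (- k * t)) at_top"
    using eventually_ge_at_top[of 0] by (rule eventually_mono) (rule assms(2))
  have "filterlim (\<lambda>t. - k * t) at_bot at_top"
    using assms(1) by (intro filterlim_tendsto_neg_mult_at_bot tendsto_const filterlim_ident) auto
  then have "((\<lambda>t. exp (- k * t)) \<longlongrightarrow> 0) at_top" by (rule filterlim_compose[OF exp_at_bot])
  then show "((\<lambda>t. C * exp (- k * t)) \<longlongrightarrow> 0) at_top" by (rule tendsto_mult_right_zero)
qed

lemma LES_origin_closed_loop:
  assumes "0 < l1" "0 < l2" "0 < eps" "0 < dl" "0 \<le> bt"
  shows "LES_origin (closed_loop l1 l2 us dl eps bt)"
proof -
  let ?f = "closed_loop l1 l2 us dl eps bt"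
  obtain M k where "0 < M" "0 < k" and decay: "\<And>x t. is_solution ?f x \<Longrightarrow>
      energy l1 l2 eps (x 0) \<le> exp 1 / (2 * l1) + (1 + eps) * l2 * exp 1 / 2 \<Longrightarrow> 0 \<le> t \<Longrightarrow>
      norm (x t) \<le> M * exp (- k * t) * norm (x 0)"
    using closed_loop_exponential_decay_on_sublevel[OF assms,
        where w = "exp 1 / (2 * l1) + (1 + eps) * l2 * exp 1 / 2" and us = us] by blast
  have "\<forall>x. is_solution ?f x \<and> norm (x 0) < 1 \<longrightarrow> (\<forall>t\<ge>0. norm (x t) \<le> M * exp (- k * t) * norm (x 0))"
  proof (intro allI impI)
    fix x and t :: real assume x: "is_solution ?f x \<and> norm (x 0) < 1" and t: "0 \<le> t"
    show "norm (x t) \<le> M * exp (- k * t) * norm (x 0)"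
      by (rule decay[of x t]) (use x t energy_bounded_on_unit_ball[OF assms(1-3)] in auto)
  qed
  then show ?thesis unfolding LES_origin_def using \<open>0 < M\<close> \<open>0 < k\<close> by (meson zero_less_one)
qed

lemma closed_loop_solution_tendsto_zero:
  assumes "0 < l1" "0 < l2" "0 < eps" "0 < dl" "0 \<le> bt"
    and x: "is_solution (closed_loop l1 l2 us dl eps bt) x"
  shows "(x \<longlongrightarrow> 0) at_top"
proof -
  obtain M k where "0 < M" "0 < k" and decay: "\<And>y t. is_solution (closed_loop l1 l2 us dl eps bt) y \<Longrightarrow>
      energy l1 l2 eps (y 0) \<le> energy l1 l2 eps (x 0) \<Longrightarrow> 0 \<le> t \<Longrightarrow>
      norm (y t) \<le> M * exp (- k * t) * norm (y 0)"
    using closed_loop_exponential_decay_on_sublevel[OF assms(1-5), where w = "energy l1 l2 eps (x 0)" and us = us]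
    by blast
  have "norm (x t) \<le> M * exp (- k * t) * norm (x 0)" if "0 \<le> t" for t
    by (rule decay[of x t]) (use x that in auto)
  then show ?thesis using \<open>0 < k\<close>
    by (intro tendsto_zero_if_exponential_bound[where C = "M * norm (x 0)"]) (auto simp: ac_simps)
qed

theorem theorem3:
  fixes l1 l2 us dl eps bt :: real
  assumes "l1 > 0" and "l2 > 0" and "us > 0" and "dl > 0" and "eps > 0" and "bt \<ge> 0"
    and "eps * l2 + bt < us"
  shows "GAS_origin (closed_loop l1 l2 us dl eps bt)
     \<and> LES_origin (closed_loop l1 l2 us dl eps bt)
     \<and> (\<forall>x. is_solution (closed_loop l1 l2 us dl eps bt) x \<longrightarrow>
           (\<forall>t\<ge>0. feedback l1 l2 us dl eps bt (x t) > 0))"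
proof -
  note par = assms(1,2,5,4,6)
  note LES = LES_origin_closed_loop[OF par, where us = us]
  have "\<forall>x0. \<exists>x. is_solution (closed_loop l1 l2 us dl eps bt) x \<and> x 0 = x0"
    using closed_loop_solution_exists[OF par] by blast
  moreover have "\<forall>x. is_solution (closed_loop l1 l2 us dl eps bt) x \<longrightarrow> (x \<longlongrightarrow> 0) at_top"
    using closed_loop_solution_tendsto_zero[OF par] by blast
  ultimately have "GAS_origin (closed_loop l1 l2 us dl eps bt)"
    unfolding GAS_origin_def using stable_if_LES_origin[OF LES] by (intro conjI)
  moreover have "\<forall>x. is_solution (closed_loop l1 l2 us dl eps bt) x \<longrightarrow>
      (\<forall>t\<ge>0. feedback l1 l2 us dl eps bt (x t) > 0)"
    using feedback_pos[OF assms(2,4,5,6,7)] by simp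
  ultimately show ?thesis using LES by (intro conjI)
qed

end
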